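(* Let $q$ be a power of $2$ and $f(X)=X(X^{q-1}-c)^{q+1}$ on $\mathbb{F}_{q^2}$, with $a,\beta,g,L_{[u:v]},\mathbb{P}^1$ as in the context. If $c\in\mathbb{F}_q\setminus\{0,1\}$, then $\mathcal{G}(f)$ is isomorphic to \[ \mathcal{C}_1\oplus\bigoplus_{L_{[u:v]}\in\mathbb{P}^1}\frac{q-1}{\operatorname{ord}(g(u,v))}\times\mathcal{C}_{\operatorname{ord}(g(u,v))}. \] If $c=1$, then $\mathcal{G}(f)$ is isomorphic to \[ (\mathcal{C}_1,\mathcal{T}_{q-1})\oplus\bigoplus_{L_{[u:v]}\in\mathbb{P}^1\setminus\{L_{[1:0]}\}}\frac{q-1}{\operatorname{ord}(g(u,v))}\times\mathcal{C}_{\operatorname{ord}(g(u,v))}. \]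
   Context: $a\in\mathbb{F}_q$ with $\operatorname{Tr}(a)=1$ (absolute trace to $\mathbb{F}_2$), $\beta\in\mathbb{F}_{q^2}$ with $\beta^2+\beta+a=0$; every element of $\mathbb{F}_{q^2}$ is uniquely $x+y\beta$, $x,y\in\mathbb{F}_q$. For $(x,y)\neq(0,0)$, $g(x,y)=c^2+1+\frac{cy^2}{x^2+xy+y^2a}\in\mathbb{F}_q$, invariant under scaling by $\mathbb{F}_q^*$. For $(u,v)\neq(0,0)$, $L_{[u:v]}=\{\lambda(u+v\beta):\lambda\in\mathbb{F}_q\}$, $\mathbb{P}^1$ is the set of these $q+1$ lines, and $\operatorname{ord}$ is multiplicative order in $\mathbb{F}_q^*$. $\mathcal{G}(f)$ is the functional graph (vertices $\mathbb{F}_{q^2}$, edges $\langle x,f(x)\rangle$). Graph notation: $\mathcal{C}_n$ is an oriented cycle of length $n$; $\mathcal{T}_m$ is the directed tree with $m+1$ vertices $P_1,\dots,P_{m+1}$ and edges $P_i\to P_{m+1}$ for $1\le i\le m$; $(\mathcal{C}_n,\mathcal{T}_m)$ is the graph obtained by replacing each vertex of $\mathcal{C}_n$ by a copy of $\mathcal{T}_m$ (identifying the cycle vertex with the root $P_{m+1}$); $\mathcal{G}\oplus\mathcal{H}$ is disjoint union; $k\times\mathcal{H}$ is the disjoint union of $k$ copies of $\mathcal{H}$. *)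

theory Defs
  imports Main
begin

type_synonym 'v digraph = "'v set \<times> ('v \<times> 'v) set"

definition verts :: "'v digraph \<Rightarrow> 'v set" where "verts G = fst G"
definition arcs :: "'v digraph \<Rightarrow> ('v \<times> 'v) set" where "arcs G = snd G"

definition graph_iso :: "'v digraph \<Rightarrow> 'w digraph \<Rightarrow> bool" where
  "graph_iso G H \<longleftrightarrow> (\<exists>h. bij_betw h (verts G) (verts H) \<and>
      (\<forall>x\<in>verts G. \<forall>y\<in>verts G. (x, y) \<in> arcs G \<longleftrightarrow> (h x, h y) \<in> arcs H))"

definition functional_graph :: "('a \<Rightarrow> 'a) \<Rightarrow> 'a digraph" where
  "functional_graph f = (UNIV, {(x, f x) | x. True})"

definition cycle_graph :: "nat \<Rightarrow> nat digraph" where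
  "cycle_graph n = ({0..<n}, {(i, (i + 1) mod n) | i. i < n})"

text \<open>Tree T_m: vertices P_1..P_{m+1} rendered as 1..m+1, edges P_i -> P_{m+1}.\<close>
definition tree_graph :: "nat \<Rightarrow> nat digraph" where
  "tree_graph m = ({1..m+1}, {(i, m + 1) | i. 1 \<le> i \<and> i \<le> m})"

text \<open>(C_n, T_m): each vertex of C_n replaced by a copy of T_m, cycle vertex = root.\<close>
definition cycle_tree_graph :: "nat \<Rightarrow> nat \<Rightarrow> (nat \<times> nat) digraph" where
  "cycle_tree_graph n m =
     ({0..<n} \<times> {1..m+1},
      {((i, j), (i, m + 1)) | i j. i < n \<and> 1 \<le> j \<and> j \<le> m}
      \<union> {((i, m + 1), ((i + 1) mod n, m + 1)) | i. i < n})"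

definition graph_sum :: "'v digraph \<Rightarrow> 'w digraph \<Rightarrow> ('v + 'w) digraph" where
  "graph_sum G H = (Inl ` verts G \<union> Inr ` verts H,
     {(Inl x, Inl y) | x y. (x, y) \<in> arcs G} \<union> {(Inr x, Inr y) | x y. (x, y) \<in> arcs H})"

definition graph_Sum :: "'i set \<Rightarrow> ('i \<Rightarrow> 'v digraph) \<Rightarrow> ('i \<times> 'v) digraph" where
  "graph_Sum I G = (SIGMA i:I. verts (G i),
     {((i, x), (i, y)) | i x y. i \<in> I \<and> (x, y) \<in> arcs (G i)})"

definition graph_copies :: "nat \<Rightarrow> 'v digraph \<Rightarrow> (nat \<times> 'v) digraph" where
  "graph_copies k H = graph_Sum {0..<k} (\<lambda>_. H)"

text \<open>The subfield F_q inside a field K of order q^2.\<close>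
definition Fq :: "nat \<Rightarrow> 'a::field set" where
  "Fq q = {x. x ^ q = x}"

definition abs_trace :: "nat \<Rightarrow> 'a::field \<Rightarrow> 'a" where
  "abs_trace n a = (\<Sum>i<n. a ^ (2 ^ i))"

definition mult_ord :: "'a::field \<Rightarrow> nat" where
  "mult_ord x = (LEAST k. 0 < k \<and> x ^ k = 1)"

definition gfun :: "'a::field \<Rightarrow> 'a \<Rightarrow> 'a \<Rightarrow> 'a \<Rightarrow> 'a" where
  "gfun a c x y = c ^ 2 + 1 + c * y ^ 2 / (x ^ 2 + x * y + y ^ 2 * a)"

definition line :: "nat \<Rightarrow> 'a::field \<Rightarrow> 'a \<Rightarrow> 'a \<Rightarrow> 'a set" where
  "line q \<beta> u v = {l * (u + v * \<beta>) | l. l \<in> Fq q}"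

definition P1 :: "nat \<Rightarrow> 'a::field \<Rightarrow> 'a set set" where
  "P1 q \<beta> = {line q \<beta> u v | u v. u \<in> Fq q \<and> v \<in> Fq q \<and> (u, v) \<noteq> (0, 0)}"

text \<open>A chosen representative (u,v) of a line; g(u,v) does not depend on the choice.\<close>
definition line_rep :: "nat \<Rightarrow> 'a::field \<Rightarrow> 'a set \<Rightarrow> 'a \<times> 'a" where
  "line_rep q \<beta> L = (SOME (u, v). u \<in> Fq q \<and> v \<in> Fq q \<and> (u, v) \<noteq> (0, 0) \<and> L = line q \<beta> u v)"

definition ordg :: "nat \<Rightarrow> 'a::field \<Rightarrow> 'a \<Rightarrow> 'a \<Rightarrow> 'a set \<Rightarrow> nat" where
  "ordg q \<beta> a c L = mult_ord (case line_rep q \<beta> L of (u, v) \<Rightarrow> gfun a c u v)"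

definition line_part :: "nat \<Rightarrow> 'a::field \<Rightarrow> 'a \<Rightarrow> 'a \<Rightarrow> 'a set set
    \<Rightarrow> ('a set \<times> nat \<times> nat) digraph" where
  "line_part q \<beta> a c S = graph_Sum S (\<lambda>L.
     graph_copies ((q - 1) div ordg q \<beta> a c L) (cycle_graph (ordg q \<beta> a c L)))"

end

theory Submission
  imports Defs "HOL-Library.Disjoint_Sets"
begin

text \<open>Write every element of the field as u + v\<beta> with u, v in Fq q. On the line through
  w = u + v\<beta> the power x^(q-1) is constant, equal to w^q / w, and since w^q = w + v the factor
  (x^(q-1) - c)^(q+1) equals the norm-like expression g(u, v) in Fq q. Hence f multiplies each
  punctured line by g(u, v); when this is nonzero the punctured line splits into
  (q-1)/ord(g(u, v)) cycles of length ord(g(u, v)). The punctured lines partition the nonzero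
  elements and 0 is fixed. For c = 1 the only degenerate line is Fq q itself (v = 0), which f
  sends to 0, producing the tree (C_1, T_(q-1)).\<close>

section \<open>Functional graphs assembled from pieces\<close>

definition functional_graph_iso_on ::
    "('a \<Rightarrow> 'a) \<Rightarrow> 'a set \<Rightarrow> ('v \<Rightarrow> 'a) \<Rightarrow> 'v digraph \<Rightarrow> bool" where
  "functional_graph_iso_on F S \<phi> G \<longleftrightarrow> bij_betw \<phi> (verts G) S \<and>
     (\<forall>x\<in>verts G. \<forall>y\<in>verts G. (x, y) \<in> arcs G \<longleftrightarrow> \<phi> y = F (\<phi> x))"

lemma functional_graph_iso_on_UNIV_imp_graph_iso:
  assumes "functional_graph_iso_on F UNIV \<phi> G"
  shows "graph_iso (functional_graph F) G"
proof -
  have bij: "bij_betw \<phi> (verts G) UNIV" and arc: "\<And>x y. x \<in> verts G \<Longrightarrow> y \<in> verts G \<Longrightarrow>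
      (x, y) \<in> arcs G \<longleftrightarrow> \<phi> y = F (\<phi> x)"
    using assms by (auto simp: functional_graph_iso_on_def)
  define h where "h = inv_into (verts G) \<phi>"
  have h: "bij_betw h UNIV (verts G)"
    unfolding h_def by (rule bij_betw_inv_into[OF bij])
  have hG: "h x \<in> verts G" and \<phi>h: "\<phi> (h x) = x" for x
    using h bij_betw_inv_into_right[OF bij] by (auto simp: h_def bij_betw_def)
  show ?thesis
    unfolding graph_iso_def
  proof (intro exI[of _ h] conjI ballI)
    show "bij_betw h (verts (functional_graph F)) (verts G)"
      using h by (simp add: functional_graph_def verts_def)
  next
    fix x y
    show "(x, y) \<in> arcs (functional_graph F) \<longleftrightarrow> (h x, h y) \<in> arcs G"
      using arc[OF hG hG] by (simp add: functional_graph_def arcs_def \<phi>h)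
  qed
qed

lemma functional_graph_iso_on_graph_sum:
  assumes G: "functional_graph_iso_on F A \<phi> G" and H: "functional_graph_iso_on F B \<psi> H"
    and "A \<inter> B = {}" and "F ` A \<subseteq> A" and "F ` B \<subseteq> B"
  shows "functional_graph_iso_on F (A \<union> B) (case_sum \<phi> \<psi>) (graph_sum G H)"
proof -
  have bij: "bij_betw (case_sum \<phi> \<psi>) (Inl ` verts G \<union> Inr ` verts H) (A \<union> B)"
  proof (rule bij_betw_combine[OF _ _ \<open>A \<inter> B = {}\<close>])
    show "bij_betw (case_sum \<phi> \<psi>) (Inl ` verts G) A"
      using G by (auto simp: functional_graph_iso_on_def bij_betw_def inj_on_def image_image)
    show "bij_betw (case_sum \<phi> \<psi>) (Inr ` verts H) B"
      using H by (auto simp: functional_graph_iso_on_def bij_betw_def inj_on_def image_image)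
  qed
  have \<phi>A: "\<phi> x \<in> A" "F (\<phi> x) \<in> A" if "x \<in> verts G" for x
    using G that assms(4) by (auto simp: functional_graph_iso_on_def bij_betw_def)
  have \<psi>B: "\<psi> x \<in> B" "F (\<psi> x) \<in> B" if "x \<in> verts H" for x
    using H that assms(5) by (auto simp: functional_graph_iso_on_def bij_betw_def)
  have "(s, t) \<in> arcs (graph_sum G H) \<longleftrightarrow> case_sum \<phi> \<psi> t = F (case_sum \<phi> \<psi> s)"
    if "s \<in> Inl ` verts G \<union> Inr ` verts H" "t \<in> Inl ` verts G \<union> Inr ` verts H" for s t
    using that G H \<phi>A \<psi>B \<open>A \<inter> B = {}\<close>
    by (auto simp: functional_graph_iso_on_def graph_sum_def arcs_def) (metis IntI empty_iff)+
  with bij show ?thesis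
    by (simp add: functional_graph_iso_on_def graph_sum_def verts_def)
qed

lemma graph_iso_functional_graph_sumI:
  assumes "functional_graph_iso_on F A \<phi> G" "functional_graph_iso_on F B \<psi> H"
    and "A \<inter> B = {}" "A \<union> B = UNIV" "F ` A \<subseteq> A" "F ` B \<subseteq> B"
  shows "graph_iso (functional_graph F) (graph_sum G H)"
  using functional_graph_iso_on_graph_sum[OF assms(1-3,5,6)] assms(4)
  by (auto intro: functional_graph_iso_on_UNIV_imp_graph_iso)

lemma functional_graph_iso_on_graph_Sum:
  assumes iso: "\<And>i. i \<in> I \<Longrightarrow> functional_graph_iso_on F (T i) (\<phi> i) (G i)"
    and disj: "disjoint_family_on T I" and inv: "\<And>i. i \<in> I \<Longrightarrow> F ` T i \<subseteq> T i"
  shows "functional_graph_iso_on F (\<Union>i\<in>I. T i) (\<lambda>(i, x). \<phi> i x) (graph_Sum I G)"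
proof -
  have "bij_betw (\<lambda>(i, x). \<phi> i x) ({i} \<times> verts (G i)) (T i)" if "i \<in> I" for i
  proof -
    have "(\<lambda>(i, x). \<phi> i x) ` ({i} \<times> verts (G i)) = \<phi> i ` verts (G i)" by force
    then show ?thesis
      using iso[OF that] by (auto simp: functional_graph_iso_on_def bij_betw_def inj_on_def)
  qed
  then have "bij_betw (\<lambda>(i, x). \<phi> i x) (\<Union>i\<in>I. {i} \<times> verts (G i)) (\<Union>i\<in>I. T i)"
    by (rule bij_betw_UNION_disjoint[OF disj])
  then have bij: "bij_betw (\<lambda>(i, x). \<phi> i x) (SIGMA i:I. verts (G i)) (\<Union>i\<in>I. T i)"
    by (simp add: Sigma_def)
  have "((i, x), (j, y)) \<in> arcs (graph_Sum I G) \<longleftrightarrow> \<phi> j y = F (\<phi> i x)"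
    if "i \<in> I" "j \<in> I" "x \<in> verts (G i)" "y \<in> verts (G j)" for i j x y
  proof -
    have in_T: "\<phi> j y \<in> T j" "F (\<phi> i x) \<in> T i"
      using iso[OF that(1)] iso[OF that(2)] inv[OF that(1)] that(3,4)
      by (auto simp: functional_graph_iso_on_def bij_betw_def)
    show ?thesis
    proof (cases "i = j")
      case True
      then show ?thesis
        using iso[OF that(1)] that by (auto simp: functional_graph_iso_on_def graph_Sum_def arcs_def)
    next
      case False
      then have "T i \<inter> T j = {}" using disj that(1,2) by (auto simp: disjoint_family_on_def)
      then show ?thesis using False in_T by (auto simp: graph_Sum_def arcs_def)
    qed
  qed
  with bij show ?thesis
    by (auto simp: functional_graph_iso_on_def graph_Sum_def verts_def)
qed

lemma functional_graph_iso_on_cycle_copies: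
  assumes bij: "bij_betw \<phi> ({0..<k} \<times> {0..<d}) S"
    and step: "\<And>j i. j < k \<Longrightarrow> i < d \<Longrightarrow> \<phi> (j, Suc i mod d) = F (\<phi> (j, i))"
  shows "functional_graph_iso_on F S \<phi> (graph_copies k (cycle_graph d))"
proof -
  have V: "verts (graph_copies k (cycle_graph d)) = {0..<k} \<times> {0..<d}"
    by (auto simp: graph_copies_def graph_Sum_def cycle_graph_def verts_def)
  have "((j, i), (j', i')) \<in> arcs (graph_copies k (cycle_graph d)) \<longleftrightarrow> \<phi> (j', i') = F (\<phi> (j, i))"
    if "j < k" "i < d" "j' < k" "i' < d" for j i j' i'
  proof -
    have "((j, i), (j', i')) \<in> arcs (graph_copies k (cycle_graph d)) \<longleftrightarrow> (j', i') = (j, Suc i mod d)"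
      using that by (auto simp: graph_copies_def graph_Sum_def cycle_graph_def arcs_def)
    also have "\<dots> \<longleftrightarrow> \<phi> (j', i') = \<phi> (j, Suc i mod d)"
      using bij_betw_imp_inj_on[OF bij] that by (auto dest: inj_onD)
    finally show ?thesis using step that by simp
  qed
  with bij V show ?thesis by (auto simp: functional_graph_iso_on_def)
qed

lemma functional_graph_iso_on_fixed_point:
  assumes "F r = r"
  shows "functional_graph_iso_on F {r} (\<lambda>_. r) (cycle_graph 1)"
  using assms by (auto simp: functional_graph_iso_on_def cycle_graph_def verts_def arcs_def bij_betw_def)

lemma functional_graph_iso_on_fixed_point_star:
  assumes "finite S" "card S = Suc m" "r \<in> S" "\<And>x. x \<in> S \<Longrightarrow> F x = r"
  shows "\<exists>\<phi>. functional_graph_iso_on F S \<phi> (cycle_tree_graph 1 m)"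
proof -
  have "card {1..m} = card (S - {r})" using assms(1-3) by simp
  then obtain \<psi> where \<psi>: "bij_betw \<psi> {1..m} (S - {r})"
    using assms(1) by (metis finite_same_card_bij finite_Diff finite_atLeastAtMost)
  define \<psi>' where "\<psi>' = (\<lambda>j. if j = Suc m then r else \<psi> j)"
  have "bij_betw \<psi>' {1..m} (S - {r})"
    using \<psi> by (rule bij_betw_cong[THEN iffD1, rotated]) (simp add: \<psi>'_def)
  then have "bij_betw \<psi>' ({1..m} \<union> {Suc m}) ((S - {r}) \<union> {r})"
    by (rule bij_betw_combine) (auto simp: \<psi>'_def bij_betw_def)
  then have \<psi>'_bij: "bij_betw \<psi>' {1..Suc m} S"
    using assms(3) by (simp add: atLeastAtMostSuc_conv insert_absorb)
  have \<psi>'_root: "\<psi>' j = r \<longleftrightarrow> j = Suc m" if "j \<in> {1..Suc m}" for j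
    using that \<psi> by (auto simp: \<psi>'_def bij_betw_def)
  have V: "verts (cycle_tree_graph 1 m) = {0} \<times> {1..Suc m}"
    by (simp add: cycle_tree_graph_def verts_def)
  have "bij_betw snd ({0::nat} \<times> {1..Suc m}) {1..Suc m}"
    by (auto simp: bij_betw_def inj_on_def)
  then have bij: "bij_betw (\<psi>' \<circ> snd) (verts (cycle_tree_graph 1 m)) S"
    unfolding V using \<psi>'_bij by (rule bij_betw_trans)
  have "((0, j), (0, j')) \<in> arcs (cycle_tree_graph 1 m) \<longleftrightarrow> j' = Suc m"
    if "j \<in> {1..Suc m}" "j' \<in> {1..Suc m}" for j j'
    using that by (auto simp: cycle_tree_graph_def arcs_def)
  moreover have "F (\<psi>' j) = r" if "j \<in> {1..Suc m}" for j
    using assms(4) \<psi>'_bij that by (auto simp: bij_betw_def)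
  ultimately have "(x, y) \<in> arcs (cycle_tree_graph 1 m) \<longleftrightarrow> (\<psi>' \<circ> snd) y = F ((\<psi>' \<circ> snd) x)"
    if "x \<in> verts (cycle_tree_graph 1 m)" "y \<in> verts (cycle_tree_graph 1 m)" for x y
    using that \<psi>'_root unfolding V by auto
  with bij show ?thesis by (auto simp: functional_graph_iso_on_def)
qed

section \<open>Maps whose points all have the same exact period\<close>

lemma inj_on_funpow_exact_period:
  assumes period: "(h ^^ d) x = x" and exact: "\<And>i. 0 < i \<Longrightarrow> i < d \<Longrightarrow> (h ^^ i) x \<noteq> x"
  shows "inj_on (\<lambda>i. (h ^^ i) x) {0..<d}"
proof -
  have contra: False if "i < j" "j < d" and eq: "(h ^^ i) x = (h ^^ j) x" for i j
  proof -
    have "(h ^^ (d - j + i)) x = (h ^^ (d - j)) ((h ^^ i) x)"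
      by (simp add: funpow_add)
    also have "\<dots> = (h ^^ (d - j)) ((h ^^ j) x)"
      by (simp only: eq)
    also have "\<dots> = (h ^^ (d - j + j)) x"
      by (simp add: funpow_add)
    also have "\<dots> = x"
      using that(2) period by simp
    finally have "(h ^^ (d - j + i)) x = x" .
    moreover have "0 < d - j + i" "d - j + i < d" using that(1,2) by auto
    ultimately show False using exact[of "d - j + i"] by simp
  qed
  show ?thesis
  proof (rule inj_onI)
    fix i j assume "i \<in> {0..<d}" "j \<in> {0..<d}" "(h ^^ i) x = (h ^^ j) x"
    then show "i = j" using contra[of i j] contra[of j i] by (cases i j rule: linorder_cases) auto
  qed
qed

lemma funpow_orbit_closed:
  assumes "(h ^^ d) x = x" "0 < d"
  shows "h ` (\<lambda>i. (h ^^ i) x) ` {0..<d} \<subseteq> (\<lambda>i. (h ^^ i) x) ` {0..<d}"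
proof
  fix y assume "y \<in> h ` (\<lambda>i. (h ^^ i) x) ` {0..<d}"
  then obtain i where "y = h ((h ^^ i) x)" by auto
  also have "\<dots> = (h ^^ (Suc i mod d)) x"
    using funpow_mod_eq[OF assms(1), of "Suc i"] by simp
  finally show "y \<in> (\<lambda>i. (h ^^ i) x) ` {0..<d}"
    using assms(2) by auto
qed

lemma funpow_orbit_complement_closed:
  assumes "h ` S \<subseteq> S" "0 < d" and period: "\<And>y. y \<in> S \<Longrightarrow> (h ^^ d) y = y"
    and "x \<in> S"
  shows "h ` (S - (\<lambda>i. (h ^^ i) x) ` {0..<d}) \<subseteq> S - (\<lambda>i. (h ^^ i) x) ` {0..<d}"
proof
  define Orb where "Orb = (\<lambda>i. (h ^^ i) x) ` {0..<d}"
  fix z assume "z \<in> h ` (S - Orb)"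
  then obtain y where y: "y \<in> S" "y \<notin> Orb" "z = h y" by auto
  have "h y \<notin> Orb"
  proof
    assume "h y \<in> Orb"
    then have "(h ^^ i) (h y) \<in> Orb" for i
      using funpow_orbit_closed[OF period[OF \<open>x \<in> S\<close>] \<open>0 < d\<close>] by (induction i) (auto simp: Orb_def)
    moreover have "(h ^^ (d - 1)) (h y) = y"
      using period[OF y(1)] \<open>0 < d\<close> by (metis Suc_pred' funpow_Suc_right comp_apply)
    ultimately show False using y(2) by metis
  qed
  then show "z \<in> S - Orb" using y assms(1) by auto
qed

lemma cycle_enumeration_add_orbit:
  assumes \<phi>: "bij_betw \<phi> ({0..<k} \<times> {0..<d}) R"
    and step: "\<And>j i. j < k \<Longrightarrow> i < d \<Longrightarrow> \<phi> (j, Suc i mod d) = h (\<phi> (j, i))"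
    and orbit: "bij_betw (\<lambda>i. (h ^^ i) x) {0..<d} C" and period: "(h ^^ d) x = x"
    and disj: "C \<inter> R = {}"
  shows "\<exists>\<psi>. bij_betw \<psi> ({0..<Suc k} \<times> {0..<d}) (C \<union> R) \<and>
           (\<forall>j<Suc k. \<forall>i<d. \<psi> (j, Suc i mod d) = h (\<psi> (j, i)))"
proof (intro exI conjI allI impI)
  define \<psi> where "\<psi> = (\<lambda>(j, i). if j = 0 then (h ^^ i) x else \<phi> (j - 1, i))"
  have "bij_betw \<psi> ({0} \<times> {0..<d}) C"
  proof -
    have "bij_betw snd ({0::nat} \<times> {0..<d}) {0..<d}"
      by (auto simp: bij_betw_def inj_on_def)
    from bij_betw_trans[OF this orbit] show ?thesis
      by (rule bij_betw_cong[THEN iffD1, rotated]) (auto simp: \<psi>_def)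
  qed
  moreover have "bij_betw \<psi> ({1..<Suc k} \<times> {0..<d}) R"
  proof -
    have "bij_betw (\<lambda>(j, i). (j - 1, i)) ({1..<Suc k} \<times> {0..<d}) ({0..<k} \<times> {0..<d})"
      by (rule bij_betw_byWitness[where f' = "\<lambda>(j, i). (Suc j, i)"]) auto
    from bij_betw_trans[OF this \<phi>] show ?thesis
      by (rule bij_betw_cong[THEN iffD1, rotated]) (auto simp: \<psi>_def)
  qed
  ultimately have "bij_betw \<psi> ({0} \<times> {0..<d} \<union> {1..<Suc k} \<times> {0..<d}) (C \<union> R)"
    using disj by (rule bij_betw_combine)
  moreover have "{0} \<times> {0..<d} \<union> {1..<Suc k} \<times> {0..<d} = {0..<Suc k} \<times> {0..<d}" by auto
  ultimately show "bij_betw \<psi> ({0..<Suc k} \<times> {0..<d}) (C \<union> R)" by simp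
  fix j i assume "j < Suc k" "i < d"
  then show "\<psi> (j, Suc i mod d) = h (\<psi> (j, i))"
    using step funpow_mod_eq[OF period, of "Suc i"] by (cases "j = 0") (simp_all add: \<psi>_def)
qed

lemma exact_period_cycle_enumeration:
  assumes "finite S" "0 < d" "h ` S \<subseteq> S" and period: "\<And>x. x \<in> S \<Longrightarrow> (h ^^ d) x = x"
    and exact: "\<And>x i. x \<in> S \<Longrightarrow> 0 < i \<Longrightarrow> i < d \<Longrightarrow> (h ^^ i) x \<noteq> x"
  shows "\<exists>(k::nat) \<phi>. bij_betw \<phi> ({0..<k} \<times> {0..<d}) S \<and>
           (\<forall>j<k. \<forall>i<d. \<phi> (j, Suc i mod d) = h (\<phi> (j, i)))"
  using assms(1,3) period exact
proof (induction "card S" arbitrary: S rule: less_induct)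
  case less
  note period = less.prems(3) and exact = less.prems(4)
  show ?case
  proof (cases "S = {}")
    case True
    then show ?thesis by (intro exI[of _ 0] exI[of _ "\<lambda>_. undefined"]) (auto simp: bij_betw_def)
  next
    case False
    then obtain x where x: "x \<in> S" by auto
    define Orb where "Orb = (\<lambda>i. (h ^^ i) x) ` {0..<d}"
    have orbit: "bij_betw (\<lambda>i. (h ^^ i) x) {0..<d} Orb"
      unfolding Orb_def by (rule inj_on_imp_bij_betw[OF inj_on_funpow_exact_period[OF period[OF x] exact[OF x]]])
    have "(h ^^ i) x \<in> S" for i
      using x less.prems(2) by (induction i) auto
    then have "Orb \<subseteq> S" by (auto simp: Orb_def)
    moreover have "Orb \<noteq> {}" using \<open>0 < d\<close> by (auto simp: Orb_def)
    ultimately have "card (S - Orb) < card S"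
      using less.prems(1) by (intro psubset_card_mono) auto
    moreover have "h ` (S - Orb) \<subseteq> S - Orb"
      unfolding Orb_def by (rule funpow_orbit_complement_closed[OF less.prems(2) \<open>0 < d\<close> period x])
    ultimately have "\<exists>(k::nat) \<phi>. bij_betw \<phi> ({0..<k} \<times> {0..<d}) (S - Orb) \<and>
        (\<forall>j<k. \<forall>i<d. \<phi> (j, Suc i mod d) = h (\<phi> (j, i)))"
      using less.prems(1) period exact by (intro less.hyps) auto
    then obtain k :: nat and \<phi> where IH: "bij_betw \<phi> ({0..<k} \<times> {0..<d}) (S - Orb)"
       "\<forall>j<k. \<forall>i<d. \<phi> (j, Suc i mod d) = h (\<phi> (j, i))"
      by blast
    have "Orb \<inter> (S - Orb) = {}" by blast
    from cycle_enumeration_add_orbit[OF IH(1) IH(2)[rule_format] orbit period[OF x] this]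
    obtain \<psi> where "bij_betw \<psi> ({0..<Suc k} \<times> {0..<d}) (Orb \<union> (S - Orb))"
        "\<forall>j<Suc k. \<forall>i<d. \<psi> (j, Suc i mod d) = h (\<psi> (j, i))"
      by blast
    moreover have "Orb \<union> (S - Orb) = S" using \<open>Orb \<subseteq> S\<close> by blast
    ultimately show ?thesis by (intro exI[of _ "Suc k"] exI[of _ \<psi>]) simp
  qed
qed

section \<open>Finite fields and characteristic two\<close>

lemma finite_field_pow_card_minus_one:
  fixes x :: "'a::{field,finite}"
  assumes "x \<noteq> 0"
  shows "x ^ (card (UNIV :: 'a set) - 1) = 1"
proof -
  let ?N = "UNIV - {0::'a}"
  have "bij_betw (\<lambda>y. x * y) ?N ?N"
    using assms by (intro bij_betw_byWitness[where f' = "\<lambda>y. y / x"]) (auto simp: image_subset_iff)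
  then have "(\<Prod>y\<in>?N. x * y) = (\<Prod>y\<in>?N. y)"
    by (rule prod.reindex_bij_betw)
  moreover have "(\<Prod>y\<in>?N. x * y) = x ^ card ?N * (\<Prod>y\<in>?N. y)"
    by (simp add: prod.distrib)
  moreover have "(\<Prod>y\<in>?N. y) \<noteq> 0" by simp
  ultimately show ?thesis by (simp add: card_Diff_singleton)
qed

lemma mult_ord_spec:
  fixes x :: "'a::field"
  assumes "0 < k" "x ^ k = 1"
  shows "0 < mult_ord x" "x ^ mult_ord x = 1" "\<And>i. 0 < i \<Longrightarrow> i < mult_ord x \<Longrightarrow> x ^ i \<noteq> 1"
proof -
  have ex: "\<exists>k. 0 < k \<and> x ^ k = 1" using assms by blast
  show "0 < mult_ord x" "x ^ mult_ord x = 1"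
    using LeastI_ex[OF ex] by (simp_all add: mult_ord_def)
  show "x ^ i \<noteq> 1" if "0 < i" "i < mult_ord x" for i
    using not_less_Least[of i "\<lambda>k. 0 < k \<and> x ^ k = 1"] that by (auto simp: mult_ord_def)
qed

lemma functional_graph_iso_on_scaling:
  fixes g :: "'a::{field,finite}"
  assumes "g \<noteq> 0" "0 \<notin> T" and F: "\<And>x. x \<in> T \<Longrightarrow> F x = g * x"
    and closed: "\<And>x. x \<in> T \<Longrightarrow> g * x \<in> T"
  shows "\<exists>\<phi>. functional_graph_iso_on F T \<phi>
           (graph_copies (card T div mult_ord g) (cycle_graph (mult_ord g)))"
proof -
  define d where "d = mult_ord g"
  have "card {0::'a, 1} \<le> card (UNIV :: 'a set)" by (rule card_mono) auto
  then have "1 < card (UNIV :: 'a set)" by simp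
  then have d: "0 < d" "g ^ d = 1" "\<And>i. 0 < i \<Longrightarrow> i < d \<Longrightarrow> g ^ i \<noteq> 1"
    using mult_ord_spec[OF _ finite_field_pow_card_minus_one[OF \<open>g \<noteq> 0\<close>]] unfolding d_def
    by simp_all
  have iter: "(F ^^ i) x = g ^ i * x \<and> g ^ i * x \<in> T" if "x \<in> T" for i x
    using that by (induction i) (auto simp: F closed mult.assoc)
  have "\<exists>(k::nat) \<phi>. bij_betw \<phi> ({0..<k} \<times> {0..<d}) T \<and>
      (\<forall>j<k. \<forall>i<d. \<phi> (j, Suc i mod d) = F (\<phi> (j, i)))"
  proof (rule exact_period_cycle_enumeration)
    show "(F ^^ d) x = x" if "x \<in> T" for x using iter[OF that, of d] d(2) by simp
    show "(F ^^ i) x \<noteq> x" if "x \<in> T" "0 < i" "i < d" for x i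
      using iter[OF that(1), of i] d(3)[OF that(2,3)] \<open>0 \<notin> T\<close> that(1) by auto
  qed (use d(1) F closed in auto)
  then obtain k :: nat and \<phi> where \<phi>: "bij_betw \<phi> ({0..<k} \<times> {0..<d}) T"
      and step: "\<forall>j<k. \<forall>i<d. \<phi> (j, Suc i mod d) = F (\<phi> (j, i))"
    by blast
  have "card T = k * d" using bij_betw_same_card[OF \<phi>] by simp
  with d(1) have "card T div d = k" by simp
  with \<phi> step have "functional_graph_iso_on F T \<phi> (graph_copies (card T div d) (cycle_graph d))"
    by (auto intro: functional_graph_iso_on_cycle_copies)
  then show ?thesis unfolding d_def by blast
qed

lemma char2_add_self:
  fixes x :: "'a::comm_ring_1"
  assumes "(2::'a) = 0"
  shows "x + x = 0"
  by (metis assms mult_2 mult_zero_left)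

lemma char2_minus:
  fixes x :: "'a::comm_ring_1"
  assumes "(2::'a) = 0"
  shows "- x = x"
  using char2_add_self[OF assms] by (metis add.inverse_unique)

lemma char2_diff_eq_add:
  fixes x :: "'a::comm_ring_1"
  assumes "(2::'a) = 0"
  shows "x - y = x + y"
  by (simp add: char2_minus[OF assms])

lemma char2_add_eq_0_iff:
  fixes x :: "'a::comm_ring_1"
  assumes "(2::'a) = 0"
  shows "x + y = 0 \<longleftrightarrow> x = y"
  by (metis add_diff_cancel_right' char2_diff_eq_add[OF assms] diff_self add.left_neutral
      diff_add_cancel)

lemma char2_power_two_power_add:
  fixes x :: "'a::comm_ring_1"
  assumes "(2::'a) = 0"
  shows "(x + y) ^ (2 ^ k) = x ^ (2 ^ k) + y ^ (2 ^ k)"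
proof (induction k)
  case (Suc k)
  have square: "(s + t) ^ 2 = s ^ 2 + t ^ 2" for s t :: 'a
  proof -
    have "(s + t) ^ 2 = s ^ 2 + t ^ 2 + 2 * (s * t)"
      by (simp add: power2_eq_square algebra_simps)
    then show ?thesis by (simp add: assms)
  qed
  have "(x + y) ^ (2 ^ Suc k) = ((x + y) ^ (2 ^ k)) ^ 2"
    by (simp add: power_mult[symmetric] mult.commute)
  also have "\<dots> = x ^ (2 ^ Suc k) + y ^ (2 ^ Suc k)"
    unfolding Suc square by (simp add: power_mult[symmetric] mult.commute)
  finally show ?case .
qed simp

section \<open>The quadratic extension\<close>

locale artin_schreier_extension =
  fixes q n :: nat and a \<beta> :: "'a::{field,finite}"
  assumes q_def: "q = 2 ^ n" and card_UNIV: "card (UNIV :: 'a set) = q ^ 2"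
    and a_Fq: "a \<in> Fq q" and trace_a: "abs_trace n a = 1"
    and beta_root: "\<beta> ^ 2 + \<beta> + a = 0"
begin

lemma pow_q_squared: "(x::'a) ^ (q ^ 2) = x"
proof (cases "x = 0")
  case False
  have "0 < q ^ 2" using card_UNIV by (metis card_gt_0_iff finite UNIV_not_empty)
  then show ?thesis
    using finite_field_pow_card_minus_one[OF False] card_UNIV power_minus_mult[of "q ^ 2" x]
    by simp
qed (use q_def in simp)

lemma n_pos: "0 < n"
proof (rule ccontr)
  assume "\<not> 0 < n"
  then have "card (UNIV :: 'a set) = 1" using q_def card_UNIV by simp
  moreover have "card {0::'a, 1} \<le> card (UNIV :: 'a set)" by (rule card_mono) auto
  ultimately show False by simp
qed

lemma q_ge_2: "2 \<le> q"
proof -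
  have "(2::nat) ^ 1 \<le> 2 ^ n" using n_pos by (intro power_increasing) auto
  then show ?thesis using q_def by simp
qed

lemma char_two: "(2::'a) = 0"
proof -
  have "even (q ^ 2)" using q_def n_pos by simp
  have "(-1::'a) = (-1) ^ (q ^ 2)" by (rule pow_q_squared[symmetric])
  also have "\<dots> = 1" using \<open>even (q ^ 2)\<close> by simp
  finally have "(1::'a) + 1 = 0" by (metis add.right_inverse)
  then show ?thesis by simp
qed

lemmas char2_simps = char2_add_self[OF char_two] char2_minus[OF char_two]
  char2_diff_eq_add[OF char_two]

lemma frobenius_add: "((x::'a) + y) ^ q = x ^ q + y ^ q"
  using char2_power_two_power_add[OF char_two] q_def by simp

lemma pow_q_pow_q: "((x::'a) ^ q) ^ q = x"
  using pow_q_squared[of x] by (simp add: power_mult[symmetric] power2_eq_square)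

lemma Fq_0 [simp]: "(0::'a) \<in> Fq q" and Fq_1 [simp]: "(1::'a) \<in> Fq q"
  using q_ge_2 by (simp_all add: Fq_def)

lemma Fq_add: "(x::'a) \<in> Fq q \<Longrightarrow> y \<in> Fq q \<Longrightarrow> x + y \<in> Fq q"
  by (simp add: Fq_def frobenius_add)

lemma Fq_mult: "(x::'a) \<in> Fq q \<Longrightarrow> y \<in> Fq q \<Longrightarrow> x * y \<in> Fq q"
  by (simp add: Fq_def power_mult_distrib)

lemma Fq_divide: "(x::'a) \<in> Fq q \<Longrightarrow> y \<in> Fq q \<Longrightarrow> x / y \<in> Fq q"
  by (simp add: Fq_def power_divide)

lemma Fq_power:
  assumes "(x::'a) \<in> Fq q"
  shows "x ^ k \<in> Fq q"
proof -
  have "(x ^ k) ^ q = (x ^ q) ^ k" by (simp add: power_mult[symmetric] mult.commute)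
  with assms show ?thesis by (simp add: Fq_def)
qed

lemma Fq_pow_q_minus_one: "(x::'a) \<in> Fq q \<Longrightarrow> x \<noteq> 0 \<Longrightarrow> x ^ (q - 1) = 1"
  using power_minus_mult[of q x] q_ge_2 by (simp add: Fq_def)

text \<open>Since a = \<beta>^2 + \<beta>, the trace of a telescopes to \<beta>^q + \<beta>.\<close>
lemma beta_not_in_Fq: "\<beta> \<notin> Fq q"
proof
  assume "\<beta> \<in> Fq q"
  have a_eq: "a = \<beta> ^ 2 + \<beta>"
    using beta_root char2_add_eq_0_iff[OF char_two, of "\<beta> ^ 2 + \<beta>" a] by simp
  have "abs_trace n a = (\<Sum>i<n. \<beta> ^ (2 ^ Suc i) - \<beta> ^ (2 ^ i))"
    unfolding abs_trace_def a_eq char2_power_two_power_add[OF char_two] char2_simps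
    by (simp add: power_mult[symmetric] mult.commute)
  also have "\<dots> = \<beta> ^ q - \<beta>"
    using sum_lessThan_telescope[of "\<lambda>i. \<beta> ^ (2 ^ i)" n] q_def by simp
  also have "\<dots> = 0" using \<open>\<beta> \<in> Fq q\<close> by (simp add: Fq_def)
  finally show False using trace_a by simp
qed

lemma beta_pow_q: "\<beta> ^ q = \<beta> + 1"
proof -
  let ?y = "\<beta> ^ q"
  have "?y ^ 2 + ?y + a = (\<beta> ^ 2 + \<beta> + a) ^ q"
    using a_Fq by (simp add: frobenius_add Fq_def power_mult[symmetric] mult.commute)
  then have y: "?y ^ 2 + ?y + a = 0" using beta_root q_ge_2 by simp
  have "(?y - \<beta>) * (?y + \<beta> + 1) = (?y ^ 2 + ?y + a) - (\<beta> ^ 2 + \<beta> + a)"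
    by (simp add: power2_eq_square algebra_simps char_two)
  also have "\<dots> = 0" using y beta_root by simp
  finally have "?y = \<beta> \<or> ?y + (\<beta> + 1) = 0" by (simp add: add.assoc)
  moreover have "?y \<noteq> \<beta>" using beta_not_in_Fq by (simp add: Fq_def)
  ultimately show ?thesis using char2_add_eq_0_iff[OF char_two] by blast
qed

lemma basis_unique:
  assumes "u \<in> Fq q" "v \<in> Fq q" "u' \<in> Fq q" "v' \<in> Fq q" and eq: "u + v * \<beta> = u' + v' * \<beta>"
  shows "u = u' \<and> v = v'"
proof (cases "v = v'")
  case False
  have "(v - v') * \<beta> = (u + v * \<beta>) - (u + v' * \<beta>)" by (simp add: algebra_simps)
  also have "\<dots> = u' - u" using eq by simp
  finally have "\<beta> = (u' - u) / (v - v')" using False by (simp add: eq_divide_eq mult.commute)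
  moreover have "u' - u \<in> Fq q" "v - v' \<in> Fq q" using assms by (simp_all add: char2_simps Fq_add)
  ultimately have "\<beta> \<in> Fq q" by (simp add: Fq_divide)
  then show ?thesis using beta_not_in_Fq by simp
qed (use eq in simp)

lemma basis_nonzero:
  assumes "u \<in> Fq q" "v \<in> Fq q" "(u, v) \<noteq> (0, 0)"
  shows "u + v * \<beta> \<noteq> 0"
proof
  assume "u + v * \<beta> = 0"
  then have "u + v * \<beta> = 0 + 0 * \<beta>" by simp
  then show False using basis_unique[OF assms(1,2) Fq_0 Fq_0] assms(3) by simp
qed

lemma inj_on_basis: "inj_on (\<lambda>(u, v). u + v * \<beta>) (Fq q \<times> Fq q)"
proof (rule inj_onI, clarify)
  fix u v u' v'
  assume "u \<in> Fq q" "v \<in> Fq q" "u' \<in> Fq q" "v' \<in> Fq q" "u + v * \<beta> = u' + v' * \<beta>"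
  from basis_unique[OF this] show "u = u' \<and> v = v'" .
qed

lemma card_Fq_le: "card (Fq q :: 'a set) \<le> q"
proof -
  have "card (Fq q :: 'a set) ^ 2 = card ((\<lambda>(u, v). u + v * \<beta>) ` (Fq q \<times> Fq q))"
    by (simp add: card_image[OF inj_on_basis] card_cartesian_product power2_eq_square)
  also have "\<dots> \<le> q ^ 2" using card_UNIV by (metis card_mono finite subset_UNIV)
  finally show ?thesis by (simp add: power2_le_iff_abs_le)
qed

text \<open>The map x \<mapsto> x + x^q takes values in Fq q and its fibres are cosets of Fq q,
  so q^2 \<le> card (Fq q)^2.\<close>
lemma card_Fq_ge: "q \<le> card (Fq q :: 'a set)"
proof -
  define T where "T = (\<lambda>x::'a. x + x ^ q)"
  have T_Fq: "T x \<in> Fq q" for x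
    unfolding T_def Fq_def by (simp add: frobenius_add pow_q_pow_q add.commute)
  have fibre: "{x. T x = T x0} \<subseteq> (\<lambda>z. z + x0) ` Fq q" for x0
  proof
    fix x assume "x \<in> {x. T x = T x0}"
    then have "x + x ^ q = x0 + x0 ^ q" by (simp add: T_def)
    moreover have "(x + x0) + (x ^ q + x0 ^ q) = (x + x ^ q) + (x0 + x0 ^ q)"
      by (simp add: algebra_simps)
    ultimately have "(x + x0) + (x ^ q + x0 ^ q) = 0" by (simp add: char2_simps)
    then have "x + x0 = x ^ q + x0 ^ q" by (simp add: char2_add_eq_0_iff[OF char_two])
    then have "(x + x0) ^ q = x + x0" unfolding frobenius_add by simp
    then have "x + x0 \<in> Fq q" by (simp add: Fq_def)
    moreover have "x = (x + x0) + x0" by (simp add: add.assoc char2_simps)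
    ultimately show "x \<in> (\<lambda>z. z + x0) ` Fq q" by blast
  qed
  have card_fibre: "card {x. T x = y} \<le> card (Fq q :: 'a set)" if y: "y \<in> range T" for y
  proof -
    obtain x0 where "y = T x0" using y by auto
    then have "card {x. T x = y} \<le> card ((\<lambda>z. z + x0) ` Fq q)"
      using fibre[of x0] by (intro card_mono) auto
    also have "\<dots> \<le> card (Fq q :: 'a set)" by (rule card_image_le) simp
    finally show ?thesis .
  qed
  have "UNIV = (\<Union>y\<in>range T. {x. T x = y})" by auto
  then have "q ^ 2 \<le> (\<Sum>y\<in>range T. card {x. T x = y})"
    using card_UNIV card_UN_le[of "range T" "\<lambda>y. {x. T x = y}"] by simp
  also have "\<dots> \<le> card (range T) * card (Fq q :: 'a set)"
    using sum_mono[OF card_fibre] by simp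
  also have "\<dots> \<le> card (Fq q :: 'a set) * card (Fq q :: 'a set)"
    using T_Fq by (intro mult_right_mono card_mono) auto
  finally have "q ^ 2 \<le> card (Fq q :: 'a set) ^ 2" by (simp add: power2_eq_square)
  then show ?thesis by (simp add: power2_le_iff_abs_le)
qed

lemma card_Fq: "card (Fq q :: 'a set) = q"
  using card_Fq_le card_Fq_ge by simp

lemma basis_exists: "\<exists>u\<in>Fq q. \<exists>v\<in>Fq q. x = u + v * \<beta>"
proof -
  have "card ((\<lambda>(u, v). u + v * \<beta>) ` (Fq q \<times> Fq q)) = card (UNIV :: 'a set)"
    by (simp add: card_image[OF inj_on_basis] card_cartesian_product card_Fq card_UNIV power2_eq_square)
  then have "(\<lambda>(u, v). u + v * \<beta>) ` (Fq q \<times> Fq q) = UNIV"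
    by (intro card_eq_UNIV_imp_eq_UNIV) simp_all
  then have "x \<in> (\<lambda>(u, v). u + v * \<beta>) ` (Fq q \<times> Fq q)" by simp
  then obtain u v where "u \<in> Fq q" "v \<in> Fq q" "x = u + v * \<beta>" by auto
  then show ?thesis by blast
qed

lemma basis_pow_q: "u \<in> Fq q \<Longrightarrow> v \<in> Fq q \<Longrightarrow> (u + v * \<beta>) ^ q = u + v * \<beta> + v"
  by (simp add: frobenius_add power_mult_distrib beta_pow_q Fq_def algebra_simps)

lemma basis_norm: "(u + v * \<beta>) * (u + v * \<beta> + v) = u ^ 2 + u * v + v ^ 2 * a"
proof -
  have "\<beta> ^ 2 + \<beta> = a"
    using beta_root char2_add_eq_0_iff[OF char_two, of "\<beta> ^ 2 + \<beta>" a] by simp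
  moreover have "(u + v * \<beta>) * (u + v * \<beta> + v) = u ^ 2 + u * v + v ^ 2 * (\<beta> ^ 2 + \<beta>) + 2 * (u * v * \<beta>)"
    by (simp add: power2_eq_square algebra_simps)
  ultimately show ?thesis by (simp add: char_two)
qed

lemma pow_q_minus_one_eq:
  assumes "(w::'a) \<noteq> 0"
  shows "w ^ (q - 1) = w ^ q / w" and "(w ^ (q - 1)) ^ q = w / w ^ q"
proof -
  have qw: "w ^ q = w ^ (q - 1) * w"
    using power_minus_mult[of q w] q_ge_2 by simp
  then show "w ^ (q - 1) = w ^ q / w" using assms by (metis nonzero_mult_div_cancel_right)
  have "(w ^ (q - 1)) ^ q * w ^ q = (w ^ q) ^ q"
    by (simp only: power_mult_distrib[symmetric] qw[symmetric])
  then show "(w ^ (q - 1)) ^ q = w / w ^ q"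
    using assms by (simp add: pow_q_pow_q eq_divide_eq)
qed

lemma f_factor_eq_gfun:
  assumes u: "u \<in> Fq q" and v: "v \<in> Fq q" and c: "c \<in> Fq q" and w: "u + v * \<beta> \<noteq> 0"
  shows "((u + v * \<beta>) ^ (q - 1) - c) ^ (q + 1) = gfun a c u v"
proof -
  define w where "w = u + v * \<beta>"
  define W where "W = w + v"
  define r where "r = w ^ (q - 1)"
  have W_eq: "w ^ q = W" and "w \<noteq> 0"
    using basis_pow_q[OF u v] w by (simp_all add: w_def W_def)
  then have "W \<noteq> 0" by auto
  have r: "r = W / w" and rq: "r ^ q = w / W"
    using pow_q_minus_one_eq[OF \<open>w \<noteq> 0\<close>] W_eq by (simp_all add: r_def)
  have "(r - c) ^ q = w / W + c"
    using c rq by (simp add: char2_simps frobenius_add Fq_def)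
  then have "(r - c) ^ (q + 1) = (w / W + c) * (W / w + c)"
    using r by (simp add: char2_simps)
  also have "\<dots> = 1 + c ^ 2 + c * ((w ^ 2 + W ^ 2) / (w * W))"
    using \<open>w \<noteq> 0\<close> \<open>W \<noteq> 0\<close> by (simp add: field_simps power2_eq_square)
  also have "w ^ 2 + W ^ 2 = v ^ 2"
    using char2_power_two_power_add[OF char_two, of w W 1] by (simp add: W_def char2_simps add.assoc[symmetric])
  also have "w * W = u ^ 2 + u * v + v ^ 2 * a"
    using basis_norm by (simp add: w_def W_def)
  finally show ?thesis
    by (simp add: gfun_def r_def w_def add.commute)
qed

lemma f_factor_eq_zero:
  assumes u: "u \<in> Fq q" and v: "v \<in> Fq q" and c: "c \<in> Fq q" and w: "u + v * \<beta> \<noteq> 0"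
    and zero: "((u + v * \<beta>) ^ (q - 1) - c) ^ (q + 1) = 0"
  shows "c = 1 \<and> v = 0"
proof -
  define w where "w = u + v * \<beta>"
  define r where "r = w ^ (q - 1)"
  have W_eq: "w ^ q = w + v" and "w \<noteq> 0"
    using basis_pow_q[OF u v] w by (simp_all add: w_def)
  then have "w + v \<noteq> 0" by auto
  have "(r - c) ^ (q + 1) = 0" using zero by (simp add: r_def w_def)
  then have "r = c" by auto
  have r: "r = (w + v) / w" and rq: "r ^ q = w / (w + v)"
    using pow_q_minus_one_eq[OF \<open>w \<noteq> 0\<close>] W_eq by (simp_all add: r_def)
  then have "r ^ q * r = 1" using \<open>w \<noteq> 0\<close> \<open>w + v \<noteq> 0\<close> by simp
  then have "c * c = 1" using c \<open>r = c\<close> by (simp add: Fq_def)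
  then have "(c + 1) ^ 2 = 0"
    using char2_power_two_power_add[OF char_two, of c 1 1] by (simp add: power2_eq_square char2_simps)
  then have "c = 1" using char2_add_eq_0_iff[OF char_two] by simp
  with r \<open>r = c\<close> \<open>w \<noteq> 0\<close> have "v = 0" by (simp add: field_simps)
  with \<open>c = 1\<close> show ?thesis by simp
qed

lemma gfun_Fq: "u \<in> Fq q \<Longrightarrow> v \<in> Fq q \<Longrightarrow> c \<in> Fq q \<Longrightarrow> gfun a c u v \<in> Fq q"
  unfolding gfun_def using a_Fq by (simp add: Fq_add Fq_mult Fq_divide Fq_power)

section \<open>Lines through the origin\<close>

lemma line_eq_image: "line q \<beta> u v = (\<lambda>l. l * (u + v * \<beta>)) ` Fq q"
  by (auto simp: line_def)

lemma line_1_0: "line q \<beta> 1 0 = Fq q"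
  by (simp add: line_eq_image)

lemma Fq_in_P1: "Fq q \<in> P1 q \<beta>"
proof -
  have "line q \<beta> 1 0 \<in> P1 q \<beta>"
    unfolding P1_def by (rule CollectI, rule exI[of _ 1], rule exI[of _ 0]) simp
  then show ?thesis by (simp add: line_1_0)
qed

lemma P1_eq_multiples:
  assumes "L \<in> P1 q \<beta>" "x \<in> L" "x \<noteq> 0"
  shows "L = (\<lambda>l. l * x) ` Fq q"
proof -
  obtain u v where "u \<in> Fq q" "v \<in> Fq q" and L: "L = (\<lambda>l. l * (u + v * \<beta>)) ` Fq q"
    using assms(1) by (auto simp: P1_def line_eq_image)
  then obtain l0 where l0: "l0 \<in> Fq q" "x = l0 * (u + v * \<beta>)" using assms(2) by auto
  with assms(3) have "l0 \<noteq> 0" by auto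
  show ?thesis
  proof
    show "L \<subseteq> (\<lambda>l. l * x) ` Fq q"
    proof
      fix y assume "y \<in> L"
      then obtain l where "l \<in> Fq q" "y = l * (u + v * \<beta>)" using L by auto
      then have "y = (l / l0) * x" "l / l0 \<in> Fq q" using l0 \<open>l0 \<noteq> 0\<close> by (simp_all add: Fq_divide)
      then show "y \<in> (\<lambda>l. l * x) ` Fq q" by blast
    qed
    show "(\<lambda>l. l * x) ` Fq q \<subseteq> L"
    proof
      fix y assume "y \<in> (\<lambda>l. l * x) ` Fq q"
      then obtain l where "l \<in> Fq q" "y = l * x" by auto
      then have "y = (l * l0) * (u + v * \<beta>)" "l * l0 \<in> Fq q" using l0 by (simp_all add: Fq_mult)
      then show "y \<in> L" using L by blast
    qed
  qed
qed

lemma P1_eqI: "L1 \<in> P1 q \<beta> \<Longrightarrow> L2 \<in> P1 q \<beta> \<Longrightarrow> x \<in> L1 \<Longrightarrow> x \<in> L2 \<Longrightarrow> x \<noteq> 0 \<Longrightarrow> L1 = L2"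
  using P1_eq_multiples by metis

lemma disjoint_family_on_punctured_lines:
  "S \<subseteq> P1 q \<beta> \<Longrightarrow> disjoint_family_on (\<lambda>L. L - {0}) S"
  by (auto simp: disjoint_family_on_def dest: P1_eqI)

lemma punctured_lines_cover: "(\<Union>L\<in>P1 q \<beta>. L - {0}) = UNIV - {0}"
proof -
  have "x \<in> (\<Union>L\<in>P1 q \<beta>. L - {0})" if "x \<noteq> 0" for x
  proof -
    obtain u v where uv: "u \<in> Fq q" "v \<in> Fq q" "x = u + v * \<beta>" using basis_exists by blast
    with that have "(u, v) \<noteq> (0, 0)" by auto
    with uv have "line q \<beta> u v \<in> P1 q \<beta>" by (auto simp: P1_def)
    moreover have "x \<in> line q \<beta> u v" using uv by (auto simp: line_def intro: exI[of _ 1])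
    ultimately show ?thesis using that by blast
  qed
  then show ?thesis by auto
qed

lemma card_punctured_line:
  assumes "L \<in> P1 q \<beta>"
  shows "card (L - {0}) = q - 1"
proof -
  obtain u v where uv: "u \<in> Fq q" "v \<in> Fq q" "(u, v) \<noteq> (0, 0)" and L: "L = line q \<beta> u v"
    using assms by (auto simp: P1_def)
  have "inj_on (\<lambda>l. l * (u + v * \<beta>)) (Fq q)"
    using basis_nonzero[OF uv] by (auto simp: inj_on_def)
  then have "card L = q" unfolding L line_eq_image by (simp add: card_image card_Fq)
  moreover have "0 \<in> L" unfolding L line_eq_image by force
  ultimately show ?thesis by simp
qed

lemma line_rep_spec:
  assumes "L \<in> P1 q \<beta>" "line_rep q \<beta> L = (u, v)"
  shows "u \<in> Fq q" "v \<in> Fq q" "(u, v) \<noteq> (0, 0)" "L = line q \<beta> u v"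
proof -
  have "\<exists>p. case p of (u, v) \<Rightarrow> u \<in> Fq q \<and> v \<in> Fq q \<and> (u, v) \<noteq> (0, 0) \<and> L = line q \<beta> u v"
    using assms(1) by (auto simp: P1_def)
  from someI_ex[OF this] assms(2)
  show "u \<in> Fq q" "v \<in> Fq q" "(u, v) \<noteq> (0, 0)" "L = line q \<beta> u v"
    by (simp_all add: line_rep_def)
qed

section \<open>The map f on the lines\<close>

definition f :: "'a \<Rightarrow> 'a \<Rightarrow> 'a" where
  "f c x = x * (x ^ (q - 1) - c) ^ (q + 1)"

lemma Fq_mult_line: "L \<in> P1 q \<beta> \<Longrightarrow> g \<in> Fq q \<Longrightarrow> x \<in> L \<Longrightarrow> g * x \<in> L"
  by (auto simp: P1_def line_def mult.assoc intro!: Fq_mult)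

lemma f_on_line:
  assumes L: "L \<in> P1 q \<beta>" and c: "c \<in> Fq q" and nondeg: "\<not> (c = 1 \<and> L = Fq q)"
  obtains g where "g \<in> Fq q" "g \<noteq> 0" "ordg q \<beta> a c L = mult_ord g"
    "\<And>x. x \<in> L \<Longrightarrow> f c x = g * x"
proof -
  obtain u v where rep: "line_rep q \<beta> L = (u, v)" by fastforce
  note uv = line_rep_spec[OF L rep]
  define w where "w = u + v * \<beta>"
  have "w \<noteq> 0" using basis_nonzero[OF uv(1-3)] by (simp add: w_def)
  have factor: "(w ^ (q - 1) - c) ^ (q + 1) = gfun a c u v"
    using f_factor_eq_gfun[OF uv(1,2) c] \<open>w \<noteq> 0\<close> by (simp add: w_def)
  have "gfun a c u v \<noteq> 0"
  proof
    assume "gfun a c u v = 0"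
    then have "c = 1 \<and> v = 0"
      using f_factor_eq_zero[OF uv(1,2) c] factor \<open>w \<noteq> 0\<close> by (simp add: w_def)
    moreover from this have "u \<in> L" "u \<noteq> 0"
      using uv by (auto simp: line_def intro: exI[of _ 1])
    ultimately show False
      using nondeg P1_eqI[OF L Fq_in_P1] uv(1) by blast
  qed
  moreover have "f c x = gfun a c u v * x" if x: "x \<in> L" for x
  proof -
    obtain l where l: "l \<in> Fq q" "x = l * w" using x uv(4) by (auto simp: line_def w_def)
    show ?thesis
    proof (cases "l = 0")
      case False
      then have "x ^ (q - 1) = w ^ (q - 1)"
        using l Fq_pow_q_minus_one[OF l(1)] by (simp add: power_mult_distrib)
      then show ?thesis using factor by (simp add: f_def)
    qed (use l in \<open>simp add: f_def\<close>)
  qed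
  moreover have "ordg q \<beta> a c L = mult_ord (gfun a c u v)"
    by (simp add: ordg_def rep)
  ultimately show thesis
    using that gfun_Fq[OF uv(1,2) c] by blast
qed

lemma punctured_line_iso_cycle_copies:
  assumes L: "L \<in> P1 q \<beta>" and c: "c \<in> Fq q" and nondeg: "\<not> (c = 1 \<and> L = Fq q)"
  shows "f c ` (L - {0}) \<subseteq> L - {0}"
    and "\<exists>\<phi>. functional_graph_iso_on (f c) (L - {0}) \<phi>
           (graph_copies ((q - 1) div ordg q \<beta> a c L) (cycle_graph (ordg q \<beta> a c L)))"
proof -
  obtain g where g: "g \<in> Fq q" "g \<noteq> 0" "ordg q \<beta> a c L = mult_ord g"
      and f_eq: "\<And>x. x \<in> L \<Longrightarrow> f c x = g * x"
    using f_on_line[OF assms] by blast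
  have closed: "g * x \<in> L - {0}" if "x \<in> L - {0}" for x
    using that Fq_mult_line[OF L g(1)] g(2) by auto
  then show "f c ` (L - {0}) \<subseteq> L - {0}" using f_eq by auto
  show "\<exists>\<phi>. functional_graph_iso_on (f c) (L - {0}) \<phi>
           (graph_copies ((q - 1) div ordg q \<beta> a c L) (cycle_graph (ordg q \<beta> a c L)))"
    using functional_graph_iso_on_scaling[OF g(2), of "L - {0}" "f c"] f_eq closed
    by (simp add: card_punctured_line[OF L] g(3))
qed

lemma punctured_lines_iso_line_part:
  assumes S: "S \<subseteq> P1 q \<beta>" and c: "c \<in> Fq q" and nondeg: "c = 1 \<Longrightarrow> Fq q \<notin> S"
  shows "f c ` (\<Union>L\<in>S. L - {0}) \<subseteq> (\<Union>L\<in>S. L - {0})"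
    and "\<exists>\<Phi>. functional_graph_iso_on (f c) (\<Union>L\<in>S. L - {0}) \<Phi> (line_part q \<beta> a c S)"
proof -
  have L: "L \<in> P1 q \<beta>" "\<not> (c = 1 \<and> L = Fq q)" if "L \<in> S" for L
    using that S nondeg by auto
  show "f c ` (\<Union>L\<in>S. L - {0}) \<subseteq> (\<Union>L\<in>S. L - {0})"
    using punctured_line_iso_cycle_copies(1)[OF L(1) c L(2)] by blast
  have "\<forall>L\<in>S. \<exists>\<phi>. functional_graph_iso_on (f c) (L - {0}) \<phi>
      (graph_copies ((q - 1) div ordg q \<beta> a c L) (cycle_graph (ordg q \<beta> a c L)))"
    using punctured_line_iso_cycle_copies(2)[OF L(1) c L(2)] by blast
  from bchoice[OF this] obtain \<phi> where \<phi>: "\<forall>L\<in>S. functional_graph_iso_on (f c) (L - {0}) (\<phi> L)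
      (graph_copies ((q - 1) div ordg q \<beta> a c L) (cycle_graph (ordg q \<beta> a c L)))" ..
  have "functional_graph_iso_on (f c) (\<Union>L\<in>S. L - {0}) (\<lambda>(L, x). \<phi> L x) (line_part q \<beta> a c S)"
    unfolding line_part_def
  proof (rule functional_graph_iso_on_graph_Sum)
    show "disjoint_family_on (\<lambda>L. L - {0}) S" by (rule disjoint_family_on_punctured_lines[OF S])
  qed (use \<phi> punctured_line_iso_cycle_copies(1)[OF L(1) c L(2)] in auto)
  then show "\<exists>\<Phi>. functional_graph_iso_on (f c) (\<Union>L\<in>S. L - {0}) \<Phi> (line_part q \<beta> a c S)" by blast
qed

lemma f_zero: "f c 0 = 0"
  by (simp add: f_def)

lemma f_one_Fq: "x \<in> Fq q \<Longrightarrow> f 1 x = 0"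
  using Fq_pow_q_minus_one[of x] by (cases "x = 0") (simp_all add: f_def)

lemma Fq_punctured_lines_disjoint: "Fq q \<inter> (\<Union>L\<in>P1 q \<beta> - {Fq q}. L - {0}) = {}"
  using P1_eqI[OF _ Fq_in_P1] by blast

lemma Fq_Un_punctured_lines: "Fq q \<union> (\<Union>L\<in>P1 q \<beta> - {Fq q}. L - {0}) = UNIV"
proof -
  have "x \<in> (\<Union>L\<in>P1 q \<beta> - {Fq q}. L - {0})" if "x \<notin> Fq q" for x
  proof -
    from that have "x \<in> (\<Union>L\<in>P1 q \<beta>. L - {0})"
      unfolding punctured_lines_cover by auto
    then obtain L where "L \<in> P1 q \<beta>" "x \<in> L - {0}" by blast
    with that show ?thesis by blast
  qed
  then show ?thesis by blast
qed

lemma graph_iso_functional_graph_f: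
  assumes "c \<in> Fq q" "c \<noteq> 1"
  shows "graph_iso (functional_graph (f c)) (graph_sum (cycle_graph 1) (line_part q \<beta> a c (P1 q \<beta>)))"
proof -
  note lines = punctured_lines_iso_line_part[OF subset_refl assms(1)]
  obtain \<Phi> where "functional_graph_iso_on (f c) (\<Union>L\<in>P1 q \<beta>. L - {0}) \<Phi> (line_part q \<beta> a c (P1 q \<beta>))"
    using lines(2) assms(2) by blast
  with functional_graph_iso_on_fixed_point[of "f c" 0, OF f_zero]
  show ?thesis
    by (rule graph_iso_functional_graph_sumI)
      (use lines(1) assms(2) punctured_lines_cover f_zero in auto)
qed

lemma graph_iso_functional_graph_f_one:
  "graph_iso (functional_graph (f 1))
     (graph_sum (cycle_tree_graph 1 (q - 1)) (line_part q \<beta> a 1 (P1 q \<beta> - {Fq q})))"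
proof -
  have "card (Fq q :: 'a set) = Suc (q - 1)" using card_Fq q_ge_2 by simp
  then obtain \<phi> where \<phi>: "functional_graph_iso_on (f 1) (Fq q) \<phi> (cycle_tree_graph 1 (q - 1))"
    using functional_graph_iso_on_fixed_point_star[of "Fq q" "q - 1" 0 "f 1"] f_one_Fq by auto
  note lines = punctured_lines_iso_line_part[OF Diff_subset Fq_1, of "{Fq q}"]
  obtain \<Phi> where "functional_graph_iso_on (f 1) (\<Union>L\<in>P1 q \<beta> - {Fq q}. L - {0}) \<Phi>
      (line_part q \<beta> a 1 (P1 q \<beta> - {Fq q}))"
    using lines(2) by blast
  with \<phi> show ?thesis
    by (rule graph_iso_functional_graph_sumI)
      (use Fq_punctured_lines_disjoint Fq_Un_punctured_lines f_one_Fq lines(1) in auto)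
qed

end

theorem mainTheorem10:
  fixes q n :: nat and a \<beta> c :: "'a::{field,finite}"
  assumes "q = 2 ^ n"
    and "card (UNIV :: 'a set) = q ^ 2"
    and "a \<in> Fq q" and "abs_trace n a = 1"
    and "\<beta> ^ 2 + \<beta> + a = 0"
    and "c \<in> Fq q"
  shows "(c \<noteq> 0 \<and> c \<noteq> 1 \<longrightarrow>
           graph_iso (functional_graph (\<lambda>x. x * (x ^ (q - 1) - c) ^ (q + 1)))
             (graph_sum (cycle_graph 1) (line_part q \<beta> a c (P1 q \<beta>))))
       \<and> (c = 1 \<longrightarrow>
           graph_iso (functional_graph (\<lambda>x. x * (x ^ (q - 1) - c) ^ (q + 1)))
             (graph_sum (cycle_tree_graph 1 (q - 1))
                (line_part q \<beta> a c (P1 q \<beta> - {line q \<beta> 1 0}))))"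
proof -
  interpret artin_schreier_extension q n a \<beta>
    using assms(1-5) by unfold_locales
  have f_c: "(\<lambda>x. x * (x ^ (q - 1) - c) ^ (q + 1)) = f c"
    by (simp add: fun_eq_iff f_def)
  show ?thesis
    unfolding f_c line_1_0
    using graph_iso_functional_graph_f[OF assms(6)] graph_iso_functional_graph_f_one by auto
qed

end
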